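(* Let $3\le n\le k$ be integers and let $X$ be the discrete-time Markov chain on $\mathbb{N}^{n-1}$ described in the context. If $X$ is stable and $\mathbf{Q}$ is a random vector distributed according to its stationary distribution, then $$\mathbb{E}[|\mathbf{Q}|]=\frac{k(n-1)}{2(k-n)}.$$
   Context: $\mathbb{N}=\{0,1,2,\dots\}$; for $\mathbf{x}\in\mathbb{N}^{n-1}$, $|\mathbf{x}|=x_1+\dots+x_{n-1}$. $\mathbf{0}$, $\mathbf{1}$ are the all-zero and all-one vectors of dimension $n-1$, $\mathbf{e}_l$ the $l$-th unit vector. For $j=0,\dots,n-1$, $R_j$ is the set of $\mathbf{x}\in\mathbb{N}^{n-1}$ with exactly $j$ zero entries. $X$ is the Markov chain on $\mathbb{N}^{n-1}$ with nonzero transition probabilities: from $\mathbf{x}\in R_0$, to $\mathbf{x}-\mathbf{1}$ w.p. $\frac{k-(n-1)}{k}$ and to $\mathbf{x}+\mathbf{e}_l$ w.p. $\frac1k$ ($l=1,\dots,n-1$); from $\mathbf{x}\in R_j$, $1\le j\le n-2$, to $\mathbf{x}+\mathbf{e}_l$ w.p. $\frac{k-(n-1-j)}{kj}$ if $x_l=0$ and w.p. $\frac1k$ if $x_l\ge1$; from $\mathbf{0}$ to $\mathbf{e}_l$ w.p. $\frac1{n-1}$. Stable means positive recurrent. *)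

theory Defs
  imports "HOL-Analysis.Analysis"
begin

text \<open>States: vectors in N^(n-1), represented as functions nat => nat whose
  coordinates 0,...,n-2 are the entries x_1,...,x_(n-1) and which vanish elsewhere.\<close>

definition states :: "nat \<Rightarrow> (nat \<Rightarrow> nat) set" where
  "states n = {x. \<forall>i. n - 1 \<le> i \<longrightarrow> x i = 0}"

definition norm1 :: "nat \<Rightarrow> (nat \<Rightarrow> nat) \<Rightarrow> nat" where
  "norm1 n x = (\<Sum>i<n - 1. x i)"

text \<open>number of zero entries (x belongs to R_j with j = nzeros n x)\<close>
definition nzeros :: "nat \<Rightarrow> (nat \<Rightarrow> nat) \<Rightarrow> nat" where
  "nzeros n x = card {i. i < n - 1 \<and> x i = 0}"

text \<open>x - 1 (used only for x in R_0)\<close>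
definition dec_all :: "nat \<Rightarrow> (nat \<Rightarrow> nat) \<Rightarrow> (nat \<Rightarrow> nat)" where
  "dec_all n x = (\<lambda>i. if i < n - 1 then x i - 1 else 0)"

definition inc :: "(nat \<Rightarrow> nat) \<Rightarrow> nat \<Rightarrow> (nat \<Rightarrow> nat)" where
  "inc x l = x(l := Suc (x l))"

definition trans :: "nat \<Rightarrow> nat \<Rightarrow> (nat \<Rightarrow> nat) \<Rightarrow> (nat \<Rightarrow> nat) \<Rightarrow> real" where
  "trans n k x y =
    (let j = nzeros n x in
     if j = 0 then
       (if y = dec_all n x then (real k - real (n - 1)) / real k else 0)
       + (\<Sum>l<n - 1. if y = inc x l then 1 / real k else 0)
     else
       (\<Sum>l<n - 1. if y = inc x l then
           (if x l = 0 then (real k - real (n - 1 - j)) / (real k * real j) else 1 / real k)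
         else 0))"

fun first_passage :: "nat \<Rightarrow> nat \<Rightarrow> nat \<Rightarrow> (nat \<Rightarrow> nat) \<Rightarrow> (nat \<Rightarrow> nat) \<Rightarrow> real" where
  "first_passage n k 0 x y = 0"
| "first_passage n k (Suc 0) x y = trans n k x y"
| "first_passage n k (Suc (Suc m)) x y =
     infsum (\<lambda>z. trans n k x z * first_passage n k (Suc m) z y) (states n - {y})"

definition pos_recurrent_state :: "nat \<Rightarrow> nat \<Rightarrow> (nat \<Rightarrow> nat) \<Rightarrow> bool" where
  "pos_recurrent_state n k x \<longleftrightarrow>
     ((\<lambda>m. first_passage n k m x x) sums 1) \<and>
     summable (\<lambda>m. real m * first_passage n k m x x)"

definition stable :: "nat \<Rightarrow> nat \<Rightarrow> bool" where
  "stable n k \<longleftrightarrow> (\<forall>x \<in> states n. pos_recurrent_state n k x)"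

definition stationary :: "nat \<Rightarrow> nat \<Rightarrow> ((nat \<Rightarrow> nat) \<Rightarrow> real) \<Rightarrow> bool" where
  "stationary n k \<pi> \<longleftrightarrow>
     (\<forall>x \<in> states n. 0 \<le> \<pi> x) \<and>
     (\<pi> has_sum 1) (states n) \<and>
     (\<forall>y \<in> states n. ((\<lambda>x. \<pi> x * trans n k x y) has_sum \<pi> y) (states n))"

end

theory Submission
  imports Defs
begin

(* Write s = |x| and Q = x_1^2 + ... + x_(n-1)^2. Every step of X adds a unit vector, except the
   step x - 1 out of R_0; for F = n Q - s^2 the contributions of that step cancel, so the drift of F
   is (n - 1) - 2 (k - n) s / k in every state, and E[drift F] = 0 gives the mean of s.
   To justify E[drift F] = 0:
   - k > n: for k = n the drift of s is the indicator of leaving R_0, so pi lives on R_0; but from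
     R_0 the chain steps down with positive probability, and by descent on s, pi vanishes.
   - E s is finite: the mean drift over a finite sublevel set is nonnegative (everything leaves
     upwards and enters from above), which applied to F bounds the partial sums of pi s.
   - For the same reason F and n s^2 - F, which have finite sublevel sets, have nonnegative mean
     drift; their drifts add up to n times the drift of s^2, whose mean is 0 because s is upward
     skip-free, so truncating at the level sets of s only loses the tail of pi. *)

lemma tendsto_sum_exhausting:
  fixes f :: "'a \<Rightarrow> 'b::{comm_monoid_add,topological_space}"
  assumes "(f has_sum L) S" and "\<And>m. finite (A m)" and "\<And>m. A m \<subseteq> S"
    and "\<And>x. x \<in> S \<Longrightarrow> eventually (\<lambda>m. x \<in> A m) sequentially"
  shows "(\<lambda>m. sum f (A m)) \<longlonglongrightarrow> L"
proof -
  have "filterlim A (finite_subsets_at_top S) sequentially"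
    unfolding filterlim_finite_subsets_at_top
  proof (intro allI impI)
    fix X assume X: "finite X \<and> X \<subseteq> S"
    then have "eventually (\<lambda>m. \<forall>x\<in>X. x \<in> A m) sequentially"
      using assms(4) by (intro eventually_ball_finite) auto
    then show "eventually (\<lambda>m. finite (A m) \<and> X \<subseteq> A m \<and> A m \<subseteq> S) sequentially"
      using assms(2,3) by (auto elim!: eventually_mono)
  qed
  with assms(1) show ?thesis
    unfolding has_sum_def by (rule filterlim_compose)
qed

lemma has_sum_sum:
  fixes f :: "'i \<Rightarrow> 'a \<Rightarrow> 'b::topological_comm_monoid_add"
  assumes "finite I" and "\<And>i. i \<in> I \<Longrightarrow> (f i has_sum a i) S"
  shows "((\<lambda>x. \<Sum>i\<in>I. f i x) has_sum (\<Sum>i\<in>I. a i)) S"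
  using assms by (induction I rule: finite_induct) (auto intro: has_sum_add)

lemma abs_has_sum_le:
  fixes f g :: "'a \<Rightarrow> real"
  assumes "(f has_sum a) A" and "(g has_sum b) A" and "\<And>x. x \<in> A \<Longrightarrow> \<bar>f x\<bar> \<le> g x"
  shows "\<bar>a\<bar> \<le> b"
proof -
  have "a \<le> b"
    using assms(1,2) by (rule has_sum_mono) (use assms(3) abs_le_D1 in blast)
  moreover have "- b \<le> a"
    using has_sum_uminusI[OF assms(2)] assms(1)
    by (rule has_sum_mono) (use assms(3) abs_le_D2 minus_le_iff in blast)
  ultimately show ?thesis by linarith
qed

section \<open>Drift of a Markov kernel\<close>

locale markov_kernel =
  fixes S :: "'a set" and P :: "'a \<Rightarrow> 'a \<Rightarrow> real" and succ :: "'a \<Rightarrow> 'a set"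
  assumes finite_succ: "x \<in> S \<Longrightarrow> finite (succ x)"
    and succ_subset: "x \<in> S \<Longrightarrow> succ x \<subseteq> S"
    and P_eq_0: "x \<in> S \<Longrightarrow> y \<notin> succ x \<Longrightarrow> P x y = 0"
    and P_nonneg: "x \<in> S \<Longrightarrow> 0 \<le> P x y"
    and sum_P: "x \<in> S \<Longrightarrow> (\<Sum>y\<in>succ x. P x y) = 1"
begin

definition drift :: "('a \<Rightarrow> real) \<Rightarrow> 'a \<Rightarrow> real" where
  "drift G x = (\<Sum>y\<in>succ x. P x y * G y) - G x"

definition sublevel :: "('a \<Rightarrow> real) \<Rightarrow> real \<Rightarrow> 'a set" where
  "sublevel G c = {x \<in> S. G x \<le> c}"

lemma drift_eq_sum_increments:
  assumes "x \<in> S"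
  shows "drift G x = (\<Sum>y\<in>succ x. P x y * (G y - G x))"
proof -
  have "(\<Sum>y\<in>succ x. P x y * G x) = G x"
    using sum_P[OF assms] by (simp flip: sum_distrib_right)
  then show ?thesis
    by (simp add: drift_def right_diff_distrib sum_subtractf)
qed

lemma drift_linear: "drift (\<lambda>y. a * F y + b * G y) x = a * drift F x + b * drift G x"
  by (simp add: drift_def algebra_simps sum.distrib sum_distrib_left)

lemma drift_diff_const: "x \<in> S \<Longrightarrow> drift (\<lambda>y. G y - c) x = drift G x"
  by (simp add: drift_eq_sum_increments)

lemma abs_sum_P_le:
  assumes "x \<in> S" and "\<And>y. y \<in> succ x \<Longrightarrow> \<bar>K y\<bar> \<le> b"
  shows "\<bar>\<Sum>y\<in>succ x. P x y * K y\<bar> \<le> b"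
proof -
  have "\<bar>\<Sum>y\<in>succ x. P x y * K y\<bar> \<le> (\<Sum>y\<in>succ x. P x y * \<bar>K y\<bar>)"
    by (rule order_trans[OF sum_abs]) (simp add: abs_mult P_nonneg[OF assms(1)])
  also have "\<dots> \<le> (\<Sum>y\<in>succ x. P x y * b)"
    by (intro sum_mono mult_left_mono assms(2) P_nonneg[OF assms(1)])
  also have "\<dots> = b"
    by (simp add: sum_P[OF assms(1)] flip: sum_distrib_right)
  finally show ?thesis .
qed

lemma abs_drift_le:
  assumes "x \<in> S" and "\<And>y. y \<in> succ x \<Longrightarrow> \<bar>G y - G x\<bar> \<le> b"
  shows "\<bar>drift G x\<bar> \<le> b"
  unfolding drift_eq_sum_increments[OF assms(1)] using assms by (rule abs_sum_P_le)

lemma sum_P_restrict: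
  assumes "x \<in> S" and "finite A"
  shows "(\<Sum>y\<in>A. P x y * K y) = (\<Sum>y\<in>succ x \<inter> A. P x y * K y)"
  using assms P_eq_0[OF assms(1)] by (intro sum.mono_neutral_right) auto

lemma abs_sum_P_sublevel_le:
  fixes lev :: "'a \<Rightarrow> nat" and g :: "nat \<Rightarrow> real" and m :: nat
  defines "A \<equiv> sublevel (\<lambda>x. real (lev x)) (real m)"
  assumes x: "x \<in> S" and "m < lev x" and fin: "finite A" and mono_g: "mono g"
    and jump: "\<And>y. y \<in> succ x \<Longrightarrow> \<bar>g (lev y) - g (lev x)\<bar> \<le> b"
  shows "\<bar>\<Sum>y\<in>A. P x y * (g (lev y) - g (Suc m))\<bar> \<le> b"
proof -
  have "\<bar>if y \<in> A then g (lev y) - g (Suc m) else 0\<bar> \<le> b" if y: "y \<in> succ x" for y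
  proof -
    have "0 \<le> b" using jump[OF y] by linarith
    moreover have "g (lev y) \<le> g (Suc m)" if "lev y \<le> m"
      using that mono_g by (simp add: monoD)
    moreover have "g (Suc m) \<le> g (lev x)"
      using \<open>m < lev x\<close> mono_g by (simp add: monoD)
    ultimately show ?thesis
      using jump[OF y] by (auto simp: A_def sublevel_def abs_le_iff)
  qed
  then have "\<bar>\<Sum>y\<in>succ x. P x y * (if y \<in> A then g (lev y) - g (Suc m) else 0)\<bar> \<le> b"
    by (rule abs_sum_P_le[OF x])
  moreover have "(\<Sum>y\<in>succ x. P x y * (if y \<in> A then g (lev y) - g (Suc m) else 0))
      = (\<Sum>y\<in>A. P x y * (g (lev y) - g (Suc m)))"
    using sum_P_restrict[OF x fin] finite_succ[OF x]
    by (simp add: sum.inter_restrict if_distrib cong: if_cong)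
  ultimately show ?thesis by simp
qed

lemma level_eq_Suc_if_leaves_sublevel:
  fixes lev :: "'a \<Rightarrow> nat"
  assumes skip_free: "\<And>x y. x \<in> S \<Longrightarrow> y \<in> succ x \<Longrightarrow> lev y \<le> Suc (lev x)"
    and "x \<in> sublevel (\<lambda>x. real (lev x)) (real m)"
    and "y \<in> succ x - sublevel (\<lambda>x. real (lev x)) (real m)"
  shows "lev y = Suc m"
proof -
  have x: "x \<in> S" and "lev x \<le> m" using assms(2) by (simp_all add: sublevel_def)
  moreover have "y \<in> S" using assms(3) succ_subset[OF x] by auto
  moreover have "lev y \<le> Suc (lev x)" using assms(3) skip_free[OF x] by simp
  ultimately show ?thesis using assms(3) by (simp add: sublevel_def)
qed

lemma sublevel_subset: "sublevel G c \<subseteq> S"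
  unfolding sublevel_def by auto

lemma eventually_in_sublevel: "x \<in> S \<Longrightarrow> eventually (\<lambda>m. x \<in> sublevel G (real m)) sequentially"
  unfolding sublevel_def eventually_sequentially
  by (metis (mono_tags, lifting) mem_Collect_eq of_nat_le_iff order_trans real_arch_simple)

end

section \<open>Drift under a stationary distribution\<close>

locale stationary_chain = markov_kernel +
  fixes \<pi> :: "'a \<Rightarrow> real"
  assumes pi_nonneg: "x \<in> S \<Longrightarrow> 0 \<le> \<pi> x"
    and pi_has_sum: "(\<pi> has_sum 1) S"
    and balance: "y \<in> S \<Longrightarrow> ((\<lambda>x. \<pi> x * P x y) has_sum \<pi> y) S"
begin

(* Stationarity tested against H on A: the inflow into A equals the outflow minus the drift in A. *)
lemma flow_balance:
  assumes "finite A" and "A \<subseteq> S"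
  shows "((\<lambda>x. \<pi> x * (\<Sum>y\<in>A. P x y * H y)) has_sum
           (\<Sum>x\<in>A. \<pi> x * ((\<Sum>y\<in>succ x - A. P x y * H y) - drift H x))) (S - A)"
proof -
  have "((\<lambda>x. \<Sum>y\<in>A. \<pi> x * P x y * H y) has_sum (\<Sum>y\<in>A. \<pi> y * H y)) S"
    using assms by (intro has_sum_sum has_sum_cmult_left balance) auto
  then have into_A: "((\<lambda>x. \<pi> x * (\<Sum>y\<in>A. P x y * H y)) has_sum (\<Sum>y\<in>A. \<pi> y * H y)) S"
    by (simp add: sum_distrib_left mult.assoc)
  have within_A: "((\<lambda>x. \<pi> x * (\<Sum>y\<in>A. P x y * H y))
      has_sum (\<Sum>x\<in>A. \<pi> x * (\<Sum>y\<in>A. P x y * H y))) A"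
    using assms(1) by simp
  have split: "(\<Sum>y\<in>A. P x y * H y) = drift H x + H x - (\<Sum>y\<in>succ x - A. P x y * H y)"
    if "x \<in> A" for x
  proof -
    have x: "x \<in> S" using that assms(2) by auto
    have "(\<Sum>y\<in>A. P x y * H y) = (\<Sum>y\<in>succ x \<inter> A. P x y * H y)"
      using x assms(1) by (rule sum_P_restrict)
    moreover have "(\<Sum>y\<in>succ x. P x y * H y)
        = (\<Sum>y\<in>succ x \<inter> A. P x y * H y) + (\<Sum>y\<in>succ x - A. P x y * H y)"
      using finite_succ[OF x] by (rule sum.Int_Diff)
    ultimately show ?thesis by (simp add: drift_def)
  qed
  have "(\<Sum>y\<in>A. \<pi> y * H y) - (\<Sum>x\<in>A. \<pi> x * (\<Sum>y\<in>A. P x y * H y))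
      = (\<Sum>x\<in>A. \<pi> x * ((\<Sum>y\<in>succ x - A. P x y * H y) - drift H x))"
    unfolding sum_subtractf[symmetric]
    by (intro sum.cong refl) (simp add: split right_diff_distrib distrib_left)
  with has_sum_Diff[OF into_A within_A assms(2)] show ?thesis
    by simp
qed

lemma sum_sublevel_drift_nonneg:
  assumes fin: "finite (sublevel G c)"
  shows "0 \<le> (\<Sum>x\<in>sublevel G c. \<pi> x * drift G x)"
proof -
  let ?A = "sublevel G c" and ?H = "\<lambda>y. G y - c"
  have inflow_nonpos: "\<pi> x * (\<Sum>y\<in>?A. P x y * ?H y) \<le> 0" if "x \<in> S - ?A" for x
    using that pi_nonneg P_nonneg
    by (intro mult_nonneg_nonpos sum_nonpos mult_nonneg_nonpos) (auto simp: sublevel_def)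
  have outflow_nonneg: "0 \<le> \<pi> x * (\<Sum>y\<in>succ x - ?A. P x y * ?H y)" if "x \<in> ?A" for x
  proof -
    have x: "x \<in> S" using that sublevel_subset by auto
    show ?thesis
      using x pi_nonneg P_nonneg succ_subset[OF x]
      by (intro mult_nonneg_nonneg sum_nonneg) (auto simp: sublevel_def)
  qed
  have "(\<Sum>x\<in>?A. \<pi> x * ((\<Sum>y\<in>succ x - ?A. P x y * ?H y) - drift ?H x)) \<le> 0"
    using flow_balance[OF fin sublevel_subset] has_sum_0_simp inflow_nonpos
    by (rule has_sum_mono)
  moreover have "drift ?H x = drift G x" if "x \<in> ?A" for x
    using that sublevel_subset by (auto intro: drift_diff_const)
  ultimately have "(\<Sum>x\<in>?A. \<pi> x * (\<Sum>y\<in>succ x - ?A. P x y * ?H y))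
      \<le> (\<Sum>x\<in>?A. \<pi> x * drift G x)"
    by (simp add: right_diff_distrib sum_subtractf)
  moreover have "0 \<le> (\<Sum>x\<in>?A. \<pi> x * (\<Sum>y\<in>succ x - ?A. P x y * ?H y))"
    using outflow_nonneg by (rule sum_nonneg)
  ultimately show ?thesis by linarith
qed

lemma tendsto_sum_sublevel:
  fixes f :: "'a \<Rightarrow> real"
  assumes "(f has_sum L) S" and "\<And>c. finite (sublevel G c)"
  shows "(\<lambda>m. sum f (sublevel G (real m))) \<longlonglongrightarrow> L"
  using assms sublevel_subset eventually_in_sublevel by (rule tendsto_sum_exhausting)

lemma drift_has_sum_nonneg:
  assumes "\<And>c. finite (sublevel G c)" and "((\<lambda>x. \<pi> x * drift G x) has_sum V) S"
  shows "0 \<le> V"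
  using tendsto_sum_sublevel[OF assms(2,1)] sum_sublevel_drift_nonneg[OF assms(1)]
  by (intro LIMSEQ_le_const) auto

lemma sum_pi_le_1: "finite A \<Longrightarrow> A \<subseteq> S \<Longrightarrow> sum \<pi> A \<le> 1"
  using pi_has_sum pi_nonneg by (intro finite_sum_le_has_sum) auto

lemma sum_sublevel_le_of_drift_le:
  assumes fin: "finite (sublevel F c)"
    and drift_le: "\<And>x. x \<in> S \<Longrightarrow> drift F x \<le> C - \<kappa> * f x"
  shows "\<kappa> * (\<Sum>x\<in>sublevel F c. \<pi> x * f x) \<le> \<bar>C\<bar>"
proof -
  let ?A = "sublevel F c"
  have A: "finite ?A" "?A \<subseteq> S" using fin sublevel_subset by auto
  have "\<kappa> * (\<Sum>x\<in>?A. \<pi> x * f x)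
      \<le> (\<Sum>x\<in>?A. \<kappa> * (\<pi> x * f x)) + (\<Sum>x\<in>?A. \<pi> x * drift F x)"
    using sum_sublevel_drift_nonneg[OF fin] by (simp add: sum_distrib_left)
  also have "\<dots> \<le> (\<Sum>x\<in>?A. \<pi> x * C)"
  proof (unfold sum.distrib[symmetric], intro sum_mono)
    fix x assume "x \<in> ?A"
    then have x: "x \<in> S" using A by auto
    have "\<pi> x * (\<kappa> * f x + drift F x) \<le> \<pi> x * C"
      using drift_le[OF x] pi_nonneg[OF x] by (intro mult_left_mono) auto
    then show "\<kappa> * (\<pi> x * f x) + \<pi> x * drift F x \<le> \<pi> x * C"
      by (simp add: algebra_simps)
  qed
  also have "\<dots> = C * sum \<pi> ?A"
    by (simp add: sum_distrib_left mult.commute)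
  also have "\<dots> \<le> \<bar>C\<bar> * sum \<pi> ?A"
    using A pi_nonneg by (intro mult_right_mono sum_nonneg) auto
  also have "\<dots> \<le> \<bar>C\<bar>"
    using sum_pi_le_1[OF A] by (intro mult_left_le) auto
  finally show ?thesis .
qed

lemma summable_of_drift_le:
  assumes fin: "\<And>c. finite (sublevel F c)" and "0 < \<kappa>"
    and drift_le: "\<And>x. x \<in> S \<Longrightarrow> drift F x \<le> C - \<kappa> * f x"
    and f_nonneg: "\<And>x. x \<in> S \<Longrightarrow> 0 \<le> f x"
  shows "(\<lambda>x. \<pi> x * f x) summable_on S"
proof (rule nonneg_bdd_above_summable_on)
  show "0 \<le> \<pi> x * f x" if "x \<in> S" for x
    using that pi_nonneg f_nonneg by simp
  show "bdd_above (sum (\<lambda>x. \<pi> x * f x) ` {X. X \<subseteq> S \<and> finite X})"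
  proof (rule bdd_aboveI2)
    fix X assume X: "X \<in> {X. X \<subseteq> S \<and> finite X}"
    then have "X \<subseteq> sublevel F (Max (F ` X))"
      by (auto simp: sublevel_def)
    then have "(\<Sum>x\<in>X. \<pi> x * f x) \<le> (\<Sum>x\<in>sublevel F (Max (F ` X)). \<pi> x * f x)"
      using fin pi_nonneg f_nonneg
      by (intro sum_mono2) (auto simp: sublevel_def intro!: mult_nonneg_nonneg)
    also have "\<dots> \<le> \<bar>C\<bar> / \<kappa>"
      using sum_sublevel_le_of_drift_le[OF fin drift_le] \<open>0 < \<kappa>\<close>
      by (simp add: field_simps mult.commute)
    finally show "(\<Sum>x\<in>X. \<pi> x * f x) \<le> \<bar>C\<bar> / \<kappa>" .
  qed
qed

lemma summable_drift:
  assumes "\<And>x y. x \<in> S \<Longrightarrow> y \<in> succ x \<Longrightarrow> \<bar>G y - G x\<bar> \<le> h x"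
    and "(\<lambda>x. \<pi> x * h x) summable_on S"
  shows "(\<lambda>x. \<pi> x * drift G x) summable_on S"
proof -
  have "\<bar>\<pi> x * drift G x\<bar> \<le> \<pi> x * h x" if "x \<in> S" for x
  proof -
    have "\<bar>drift G x\<bar> \<le> h x" using that by (intro abs_drift_le assms(1))
    then show ?thesis using pi_nonneg[OF that] by (simp add: abs_mult mult_left_mono)
  qed
  then have "(\<lambda>x. norm (\<pi> x * drift G x)) summable_on S"
    by (intro Infinite_Sum.abs_summable_on_comparison_test'[OF assms(2)]) simp
  then show ?thesis by (rule abs_summable_summable)
qed

(* Apply flow_balance to H = g o lev - g (m + 1). By skip-freeness whatever leaves A lands on
   level m + 1, where H vanishes; only the inflow from S - A remains, bounded by the tail of pi h. *)
lemma abs_sum_sublevel_drift_le: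
  fixes lev :: "'a \<Rightarrow> nat" and g :: "nat \<Rightarrow> real" and m :: nat
  defines "A \<equiv> sublevel (\<lambda>x. real (lev x)) (real m)"
  assumes fin: "finite A"
    and skip_free: "\<And>x y. x \<in> S \<Longrightarrow> y \<in> succ x \<Longrightarrow> lev y \<le> Suc (lev x)"
    and mono_g: "mono g"
    and jump: "\<And>x y. x \<in> S \<Longrightarrow> y \<in> succ x \<Longrightarrow> \<bar>g (lev y) - g (lev x)\<bar> \<le> h x"
    and summ: "(\<lambda>x. \<pi> x * h x) summable_on S"
  shows "\<bar>\<Sum>x\<in>A. \<pi> x * drift (\<lambda>x. g (lev x)) x\<bar> \<le> infsum (\<lambda>x. \<pi> x * h x) (S - A)"
proof -
  let ?H = "\<lambda>y. g (lev y) - g (Suc m)"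
  have mem_A: "x \<in> A \<longleftrightarrow> x \<in> S \<and> lev x \<le> m" for x
    unfolding A_def sublevel_def by simp
  have A_sub: "A \<subseteq> S"
    unfolding A_def by (rule sublevel_subset)
  have no_outflow: "(\<Sum>y\<in>succ x - A. P x y * ?H y) = 0" if "x \<in> A" for x
  proof (rule sum.neutral, rule ballI)
    fix y assume "y \<in> succ x - A"
    with skip_free that have "lev y = Suc m"
      unfolding A_def by (rule level_eq_Suc_if_leaves_sublevel)
    then show "P x y * ?H y = 0" by simp
  qed
  have inflow_bound: "\<bar>\<pi> x * (\<Sum>y\<in>A. P x y * ?H y)\<bar> \<le> \<pi> x * h x" if "x \<in> S - A" for x
  proof -
    have x: "x \<in> S" and "m < lev x" using that by (simp_all add: mem_A not_le)
    have "\<bar>\<Sum>y\<in>A. P x y * ?H y\<bar> \<le> h x"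
      unfolding A_def using x \<open>m < lev x\<close> fin[unfolded A_def] mono_g jump[OF x]
      by (rule abs_sum_P_sublevel_le)
    then show ?thesis using pi_nonneg[OF x] by (simp add: abs_mult mult_left_mono)
  qed
  have drift_H: "drift ?H x = drift (\<lambda>x. g (lev x)) x" if "x \<in> A" for x
    using that A_sub by (auto intro: drift_diff_const)
  have inflow: "((\<lambda>x. \<pi> x * (\<Sum>y\<in>A. P x y * ?H y))
      has_sum - (\<Sum>x\<in>A. \<pi> x * drift (\<lambda>x. g (lev x)) x)) (S - A)"
    using flow_balance[OF fin A_sub, of ?H] by (simp add: no_outflow drift_H sum_negf)
  have tail: "((\<lambda>x. \<pi> x * h x) has_sum infsum (\<lambda>x. \<pi> x * h x) (S - A)) (S - A)"
    using summable_on_subset[OF summ, of "S - A"] by auto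
  from abs_has_sum_le[OF inflow tail inflow_bound] show ?thesis
    by simp
qed

lemma drift_has_sum_0_if_skip_free:
  fixes lev :: "'a \<Rightarrow> nat" and g :: "nat \<Rightarrow> real"
  assumes fin: "\<And>c. finite (sublevel (\<lambda>x. real (lev x)) c)"
    and skip_free: "\<And>x y. x \<in> S \<Longrightarrow> y \<in> succ x \<Longrightarrow> lev y \<le> Suc (lev x)"
    and mono_g: "mono g"
    and jump: "\<And>x y. x \<in> S \<Longrightarrow> y \<in> succ x \<Longrightarrow> \<bar>g (lev y) - g (lev x)\<bar> \<le> h x"
    and summ: "(\<lambda>x. \<pi> x * h x) summable_on S"
  shows "((\<lambda>x. \<pi> x * drift (\<lambda>x. g (lev x)) x) has_sum 0) S"
proof -
  let ?A = "\<lambda>m. sublevel (\<lambda>x. real (lev x)) (real m)"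
  let ?tail = "\<lambda>m. infsum (\<lambda>x. \<pi> x * h x) (S - ?A m)"
  have "(\<lambda>x. \<pi> x * drift (\<lambda>x. g (lev x)) x) summable_on S"
    using jump summ by (rule summable_drift)
  then obtain V where V: "((\<lambda>x. \<pi> x * drift (\<lambda>x. g (lev x)) x) has_sum V) S"
    by (auto simp: summable_on_def)
  have "(\<lambda>m. \<bar>\<Sum>x\<in>?A m. \<pi> x * drift (\<lambda>x. g (lev x)) x\<bar>) \<longlonglongrightarrow> \<bar>V\<bar>"
    using tendsto_sum_sublevel[OF V fin] by (rule tendsto_rabs)
  moreover have "?tail \<longlonglongrightarrow> 0"
  proof -
    let ?I = "infsum (\<lambda>x. \<pi> x * h x) S"
    have "?tail m = ?I - (\<Sum>x\<in>?A m. \<pi> x * h x)" for m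
    proof -
      have "(\<lambda>x. \<pi> x * h x) summable_on ?A m"
        using summ sublevel_subset by (rule summable_on_subset)
      then show ?thesis
        using infsum_Diff[OF summ _ sublevel_subset] fin by simp
    qed
    moreover have "(\<lambda>m. ?I - (\<Sum>x\<in>?A m. \<pi> x * h x)) \<longlonglongrightarrow> ?I - ?I"
      using has_sum_infsum[OF summ] fin by (intro tendsto_diff tendsto_const tendsto_sum_sublevel)
    ultimately show ?thesis by simp
  qed
  moreover have "\<bar>\<Sum>x\<in>?A m. \<pi> x * drift (\<lambda>x. g (lev x)) x\<bar> \<le> ?tail m" for m
    using fin skip_free mono_g jump summ by (rule abs_sum_sublevel_drift_le)
  ultimately have "\<bar>V\<bar> \<le> 0"
    by (intro tendsto_le[OF trivial_limit_sequentially] always_eventually) auto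
  with V show ?thesis by simp
qed

lemma pi_eq_0_if_P_pos:
  assumes "x \<in> S" and "y \<in> S" and "\<pi> y = 0" and "0 < P x y"
  shows "\<pi> x = 0"
proof -
  have "\<pi> x * P x y = 0"
    using assms(1,3) pi_nonneg P_nonneg
    by (intro nonneg_has_sum_le_0D[OF balance[OF assms(2)]]) auto
  with assms(4) show ?thesis by simp
qed

end

section \<open>The chain X\<close>

definition R0 :: "nat \<Rightarrow> (nat \<Rightarrow> nat) \<Rightarrow> bool" where
  "R0 n x \<longleftrightarrow> nzeros n x = 0"

definition down_prob :: "nat \<Rightarrow> nat \<Rightarrow> real" where
  "down_prob n k = (real k - real (n - 1)) / real k"

definition up_prob :: "nat \<Rightarrow> nat \<Rightarrow> (nat \<Rightarrow> nat) \<Rightarrow> nat \<Rightarrow> real" where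
  "up_prob n k x l =
     (if x l = 0 then (real k - real (n - 1 - nzeros n x)) / (real k * real (nzeros n x))
      else 1 / real k)"

definition succs :: "nat \<Rightarrow> (nat \<Rightarrow> nat) \<Rightarrow> (nat \<Rightarrow> nat) set" where
  "succs n x = inc x ` {..<n - 1} \<union> (if R0 n x then {dec_all n x} else {})"

definition sqnorm :: "nat \<Rightarrow> (nat \<Rightarrow> nat) \<Rightarrow> real" where
  "sqnorm n x = (\<Sum>i<n - 1. real (x i) ^ 2)"

lemma R0_iff: "R0 n x \<longleftrightarrow> (\<forall>i<n - 1. x i \<noteq> 0)"
  unfolding R0_def nzeros_def by (subst card_0_eq) auto

lemma trans_eq:
  "trans n k x y = (if R0 n x \<and> y = dec_all n x then down_prob n k else 0)
     + (\<Sum>l<n - 1. if y = inc x l then up_prob n k x l else 0)"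
proof (cases "R0 n x")
  case True
  then have "up_prob n k x l = 1 / real k" if "l < n - 1" for l
    using that by (auto simp: R0_iff up_prob_def)
  with True show ?thesis
    unfolding trans_def Let_def R0_def down_prob_def by (auto intro!: sum.cong)
next
  case False
  then show ?thesis
    unfolding trans_def Let_def R0_def up_prob_def by (auto intro!: sum.cong)
qed

lemma sum_trans:
  assumes "finite A"
  shows "(\<Sum>y\<in>A. trans n k x y * G y) =
     (if R0 n x \<and> dec_all n x \<in> A then down_prob n k * G (dec_all n x) else 0)
     + (\<Sum>l<n - 1. if inc x l \<in> A then up_prob n k x l * G (inc x l) else 0)"
proof -
  have "(\<Sum>y\<in>A. (if R0 n x \<and> y = dec_all n x then down_prob n k else 0) * G y)
      = (\<Sum>y\<in>A. if y = dec_all n x then (if R0 n x then down_prob n k * G y else 0) else 0)"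
    by (intro sum.cong) auto
  also have "\<dots> = (if R0 n x \<and> dec_all n x \<in> A then down_prob n k * G (dec_all n x) else 0)"
    using assms by (simp add: sum.delta')
  finally have down: "(\<Sum>y\<in>A. (if R0 n x \<and> y = dec_all n x then down_prob n k else 0) * G y)
      = (if R0 n x \<and> dec_all n x \<in> A then down_prob n k * G (dec_all n x) else 0)" .
  have "(\<Sum>y\<in>A. \<Sum>l<n - 1. (if y = inc x l then up_prob n k x l else 0) * G y)
      = (\<Sum>l<n - 1. \<Sum>y\<in>A. if y = inc x l then up_prob n k x l * G y else 0)"
    by (subst sum.swap) (auto intro!: sum.cong)
  also have "\<dots> = (\<Sum>l<n - 1. if inc x l \<in> A then up_prob n k x l * G (inc x l) else 0)"
    using assms by (intro sum.cong refl) (simp add: sum.delta')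
  finally have up: "(\<Sum>y\<in>A. \<Sum>l<n - 1. (if y = inc x l then up_prob n k x l else 0) * G y)
      = (\<Sum>l<n - 1. if inc x l \<in> A then up_prob n k x l * G (inc x l) else 0)" .
  show ?thesis
    unfolding trans_eq distrib_right sum.distrib sum_distrib_right down up ..
qed

lemma sum_up_prob:
  assumes "0 < k"
  shows "(\<Sum>l<n - 1. up_prob n k x l) = 1 - (if R0 n x then down_prob n k else 0)"
proof -
  define Z where "Z = {i. i < n - 1 \<and> x i = 0}"
  have Z: "Z \<subseteq> {..<n - 1}" "finite Z" "card Z = nzeros n x"
    unfolding Z_def nzeros_def by auto
  have "(\<Sum>l<n - 1. up_prob n k x l)
      = (\<Sum>l\<in>Z. up_prob n k x l) + (\<Sum>l\<in>{..<n - 1} - Z. up_prob n k x l)"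
    using Z by (metis finite_lessThan sum.subset_diff add.commute)
  also have "(\<Sum>l\<in>{..<n - 1} - Z. up_prob n k x l) = (\<Sum>l\<in>{..<n - 1} - Z. 1 / real k)"
    by (intro sum.cong) (auto simp: up_prob_def Z_def)
  also have "(\<Sum>l\<in>Z. up_prob n k x l)
      = real (nzeros n x) * ((real k - real (n - 1 - nzeros n x)) / (real k * real (nzeros n x)))"
    using Z by (simp add: up_prob_def Z_def)
  also have "(\<Sum>l\<in>{..<n - 1} - Z. 1 / real k) = real (n - 1 - nzeros n x) / real k"
    using Z by (simp add: card_Diff_subset)
  also have "real (nzeros n x) * ((real k - real (n - 1 - nzeros n x)) / (real k * real (nzeros n x)))
      + real (n - 1 - nzeros n x) / real k = 1 - (if R0 n x then down_prob n k else 0)"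
  proof (cases "R0 n x")
    case True
    with assms show ?thesis
      by (simp add: R0_def down_prob_def diff_divide_distrib)
  next
    case False
    let ?j = "real (nzeros n x)" and ?m = "real (n - 1 - nzeros n x)"
    have "?j \<noteq> 0" using False by (simp add: R0_def)
    then have "?j * ((real k - ?m) / (real k * ?j)) + ?m / real k
        = (real k - ?m) / real k + ?m / real k"
      by simp
    also have "\<dots> = 1"
      using assms by (simp flip: add_divide_distrib)
    finally show ?thesis
      using False by simp
  qed
  finally show ?thesis .
qed

lemma sum_up_prob_mult_coord:
  "(\<Sum>l<n - 1. up_prob n k x l * real (x l)) = real (norm1 n x) / real k"
proof -
  have "up_prob n k x l * real (x l) = real (x l) / real k" for l
    by (simp add: up_prob_def)
  then show ?thesis
    by (simp add: norm1_def sum_divide_distrib)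
qed

lemma inc_apply: "inc x l i = x i + (if i = l then 1 else 0)"
  unfolding inc_def by simp

lemma norm1_inc: "l < n - 1 \<Longrightarrow> norm1 n (inc x l) = Suc (norm1 n x)"
  unfolding norm1_def by (simp add: inc_apply sum.distrib)

lemma norm1_dec_all: "R0 n x \<Longrightarrow> norm1 n (dec_all n x) + (n - 1) = norm1 n x"
proof -
  assume "R0 n x"
  have "norm1 n (dec_all n x) + (n - 1) = (\<Sum>i<n - 1. x i - 1) + (\<Sum>i<n - 1. 1)"
    by (simp add: norm1_def dec_all_def)
  also have "\<dots> = (\<Sum>i<n - 1. x i - 1 + 1)"
    by (simp only: sum.distrib)
  also have "\<dots> = norm1 n x"
    using \<open>R0 n x\<close> unfolding norm1_def R0_iff by (intro sum.cong) auto
  finally show ?thesis .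
qed

lemma sqnorm_inc: "l < n - 1 \<Longrightarrow> sqnorm n (inc x l) = sqnorm n x + 2 * real (x l) + 1"
proof -
  assume l: "l < n - 1"
  have "sqnorm n (inc x l) = (\<Sum>i<n - 1. real (x i) ^ 2 + (if i = l then 2 * real (x l) + 1 else 0))"
    unfolding sqnorm_def by (intro sum.cong) (auto simp: inc_apply power2_eq_square algebra_simps)
  with l show ?thesis
    by (simp add: sum.distrib sqnorm_def)
qed

lemma sqnorm_dec_all:
  "R0 n x \<Longrightarrow> sqnorm n (dec_all n x) = sqnorm n x - 2 * real (norm1 n x) + real (n - 1)"
proof -
  assume "R0 n x"
  then have "sqnorm n (dec_all n x) = (\<Sum>i<n - 1. real (x i) ^ 2 - 2 * real (x i) + 1)"
    unfolding sqnorm_def dec_all_def R0_iff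
    by (intro sum.cong) (auto simp: of_nat_diff Suc_le_eq power2_eq_square algebra_simps)
  then show ?thesis
    by (simp add: sum_subtractf sum.distrib norm1_def sqnorm_def sum_distrib_left)
qed

lemma coord_le_norm1: "i < n - 1 \<Longrightarrow> x i \<le> norm1 n x"
  unfolding norm1_def by (intro member_le_sum) auto

lemma coord_le_sqnorm: "i < n - 1 \<Longrightarrow> real (x i) \<le> sqnorm n x"
proof -
  assume i: "i < n - 1"
  have "real (x i) \<le> real (x i) ^ 2"
    by (cases "x i") (auto simp: power2_eq_square)
  also have "\<dots> \<le> sqnorm n x"
    unfolding sqnorm_def using i by (intro member_le_sum) auto
  finally show ?thesis .
qed

lemma sqnorm_le_norm1_sq: "sqnorm n x \<le> real (norm1 n x) ^ 2"
proof -
  have "sqnorm n x \<le> (\<Sum>i<n - 1. real (x i) * real (norm1 n x))"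
    unfolding sqnorm_def power2_eq_square
    by (intro sum_mono mult_left_mono) (auto simp: coord_le_norm1)
  also have "\<dots> = real (norm1 n x) ^ 2"
    by (simp add: power2_eq_square norm1_def sum_distrib_right)
  finally show ?thesis .
qed

lemma norm1_sq_le_sqnorm: "real (norm1 n x) ^ 2 \<le> real (n - 1) * sqnorm n x"
  using Cauchy_Schwarz_ineq_sum[of "\<lambda>i. real (x i)" "\<lambda>_. 1" "{..<n - 1}"]
  by (simp add: norm1_def sqnorm_def mult.commute)

lemma inc_in_states: "x \<in> states n \<Longrightarrow> l < n - 1 \<Longrightarrow> inc x l \<in> states n"
  unfolding states_def by (simp add: inc_apply)

lemma dec_all_in_states: "dec_all n x \<in> states n"
  unfolding states_def dec_all_def by simp

lemma finite_states_coord_le: "finite {x \<in> states n. \<forall>i<n - 1. x i \<le> b}"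
proof -
  let ?ext = "\<lambda>f i. if i < n - 1 then f i else (0::nat)"
  have "{x \<in> states n. \<forall>i<n - 1. x i \<le> b} \<subseteq> ?ext ` (PiE {..<n - 1} (\<lambda>_. {..b}))"
  proof
    fix x assume x: "x \<in> {x \<in> states n. \<forall>i<n - 1. x i \<le> b}"
    then have "x = ?ext (restrict x {..<n - 1})"
      by (auto simp: states_def fun_eq_iff)
    moreover have "restrict x {..<n - 1} \<in> PiE {..<n - 1} (\<lambda>_. {..b})"
      using x by auto
    ultimately show "x \<in> ?ext ` (PiE {..<n - 1} (\<lambda>_. {..b}))" by blast
  qed
  then show ?thesis
    by (rule finite_subset) (intro finite_imageI finite_PiE; simp)
qed

definition lyapunov :: "nat \<Rightarrow> (nat \<Rightarrow> nat) \<Rightarrow> real" where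
  "lyapunov n x = real n * sqnorm n x - real (norm1 n x) ^ 2"

locale X_kernel =
  fixes n k :: nat
  assumes n_pos: "1 \<le> n" and n_le_k: "n \<le> k"
begin

lemma k_pos: "0 < k"
  using n_pos n_le_k by simp

lemma down_prob_pos: "0 < down_prob n k"
  using n_pos n_le_k unfolding down_prob_def by (simp add: of_nat_diff)

lemma up_prob_nonneg: "0 \<le> up_prob n k x l"
  using n_le_k unfolding up_prob_def by (simp add: of_nat_diff)

lemma trans_nonneg: "0 \<le> trans n k x y"
  unfolding trans_eq using down_prob_pos up_prob_nonneg
  by (intro add_nonneg_nonneg sum_nonneg) auto

lemma trans_dec_all_ge: "R0 n x \<Longrightarrow> down_prob n k \<le> trans n k x (dec_all n x)"
  unfolding trans_eq using up_prob_nonneg by (auto intro!: sum_nonneg)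

lemma trans_eq_0: "y \<notin> succs n x \<Longrightarrow> trans n k x y = 0"
  unfolding trans_eq succs_def by (auto intro!: sum.neutral)

lemma sum_succs_trans:
  "(\<Sum>y\<in>succs n x. trans n k x y * G y) =
     (if R0 n x then down_prob n k * G (dec_all n x) else 0)
     + (\<Sum>l<n - 1. up_prob n k x l * G (inc x l))"
  by (subst sum_trans) (auto simp: succs_def)

sublocale markov_kernel "states n" "trans n k" "succs n"
proof
  show "finite (succs n x)" for x
    by (simp add: succs_def)
  show "succs n x \<subseteq> states n" if "x \<in> states n" for x
    using that by (auto simp: succs_def inc_in_states dec_all_in_states)
  show "(\<Sum>y\<in>succs n x. trans n k x y) = 1" for x
  proof -
    have "(\<Sum>y\<in>succs n x. trans n k x y)
        = (if R0 n x then down_prob n k else 0) + (\<Sum>l<n - 1. up_prob n k x l)"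
      using sum_succs_trans[of x "\<lambda>_. 1"] by simp
    also have "\<dots> = 1"
      unfolding sum_up_prob[OF k_pos, of n x] by simp
    finally show ?thesis .
  qed
qed (auto simp: trans_nonneg trans_eq_0)

lemma drift_eq:
  assumes "x \<in> states n"
  shows "drift G x = (if R0 n x then down_prob n k * (G (dec_all n x) - G x) else 0)
     + (\<Sum>l<n - 1. up_prob n k x l * (G (inc x l) - G x))"
  using sum_succs_trans[of x "\<lambda>y. G y - G x"] by (simp add: drift_eq_sum_increments[OF assms])

lemma real_norm1_dec_all: "R0 n x \<Longrightarrow> real (norm1 n (dec_all n x)) = real (norm1 n x) - (real n - 1)"
  using norm1_dec_all[of n x] n_pos by (simp add: of_nat_diff flip: of_nat_add)

lemma drift_norm1:
  assumes "x \<in> states n"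
  shows "drift (\<lambda>y. real (norm1 n y)) x = 1 - (if R0 n x then down_prob n k * real n else 0)"
proof -
  have "(\<Sum>l<n - 1. up_prob n k x l * (real (norm1 n (inc x l)) - real (norm1 n x)))
      = (\<Sum>l<n - 1. up_prob n k x l)"
    by (intro sum.cong) (simp_all add: norm1_inc)
  then have "drift (\<lambda>y. real (norm1 n y)) x
      = (if R0 n x then down_prob n k * (1 - real n) else 0) + (\<Sum>l<n - 1. up_prob n k x l)"
    by (simp add: drift_eq[OF assms] real_norm1_dec_all)
  also have "\<dots> = 1 - (if R0 n x then down_prob n k * real n else 0)"
    unfolding sum_up_prob[OF k_pos, of n x] by (simp add: algebra_simps)
  finally show ?thesis .
qed

lemma drift_lyapunov:
  assumes "x \<in> states n"
  shows "drift (lyapunov n) x = real n - 1 - 2 * (real k - real n) / real k * real (norm1 n x)"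
proof -
  define s where "s = real (norm1 n x)"
  define q where "q = (if R0 n x then down_prob n k else 0)"
  have up: "lyapunov n (inc x l) - lyapunov n x = 2 * real n * real (x l) + real n - 2 * s - 1"
    if "l < n - 1" for l
    using that by (simp add: s_def lyapunov_def sqnorm_inc norm1_inc power2_eq_square algebra_simps)
  have down: "lyapunov n (dec_all n x) - lyapunov n x = real n - 1 - 2 * s" if "R0 n x"
    using that n_pos
    by (simp add: s_def lyapunov_def sqnorm_dec_all real_norm1_dec_all of_nat_diff power2_eq_square
        algebra_simps)
  have "(\<Sum>l<n - 1. up_prob n k x l * (lyapunov n (inc x l) - lyapunov n x))
      = (\<Sum>l<n - 1. 2 * real n * (up_prob n k x l * real (x l))
                      + (real n - 2 * s - 1) * up_prob n k x l)"
    by (intro sum.cong refl) (simp add: up algebra_simps)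
  also have "\<dots> = 2 * real n * (\<Sum>l<n - 1. up_prob n k x l * real (x l))
        + (real n - 2 * s - 1) * (\<Sum>l<n - 1. up_prob n k x l)"
    by (simp add: sum.distrib sum_distrib_left)
  also have "\<dots> = 2 * real n * s / real k + (real n - 2 * s - 1) * (1 - q)"
    unfolding sum_up_prob_mult_coord sum_up_prob[OF k_pos, of n x] by (simp add: s_def q_def)
  finally have "drift (lyapunov n) x
      = q * (real n - 1 - 2 * s) + (2 * real n * s / real k + (real n - 2 * s - 1) * (1 - q))"
    by (cases "R0 n x") (simp_all add: drift_eq[OF assms] down q_def)
  also have "\<dots> = real n - 1 - 2 * (real k - real n) / real k * s"
    using k_pos by (simp add: field_simps)
  finally show ?thesis by (simp add: s_def)
qed

lemma norm1_succs:
  assumes "y \<in> succs n x"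
  shows "norm1 n y = Suc (norm1 n x) \<or> (R0 n x \<and> norm1 n y + (n - 1) = norm1 n x)"
proof (cases "y \<in> inc x ` {..<n - 1}")
  case True
  then show ?thesis by (auto simp: norm1_inc)
next
  case False
  with assms have "R0 n x" and "y = dec_all n x"
    by (auto simp: succs_def split: if_splits)
  then show ?thesis using norm1_dec_all by blast
qed

lemma finite_sublevel_coord_le:
  assumes "\<And>x i. x \<in> states n \<Longrightarrow> i < n - 1 \<Longrightarrow> real (x i) \<le> G x"
  shows "finite (sublevel G c)"
proof (rule finite_subset[OF _ finite_states_coord_le])
  show "sublevel G c \<subseteq> {x \<in> states n. \<forall>i<n - 1. x i \<le> nat \<lceil>c\<rceil>}"
  proof (intro subsetI CollectI conjI allI impI)
    fix x assume x: "x \<in> sublevel G c"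
    then show "x \<in> states n" by (simp add: sublevel_def)
    fix i assume i: "i < n - 1"
    have "real (x i) \<le> c"
      using x assms[OF _ i] by (force simp: sublevel_def)
    then have "int (x i) \<le> \<lceil>c\<rceil>"
      by (metis ceiling_mono ceiling_of_nat)
    then show "x i \<le> nat \<lceil>c\<rceil>" by linarith
  qed
qed

lemma sqnorm_le_lyapunov: "sqnorm n x \<le> lyapunov n x"
  using norm1_sq_le_sqnorm[of n x] n_pos by (simp add: lyapunov_def of_nat_diff algebra_simps)

lemma norm1_sq_le: "real (norm1 n x) ^ 2 \<le> real n * real (norm1 n x) ^ 2 - lyapunov n x"
  using mult_left_mono[OF sqnorm_le_norm1_sq[of n x], of "real n"] by (simp add: lyapunov_def)

lemma abs_norm1_sq_increment_le:
  assumes "y \<in> succs n x"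
  shows "\<bar>real (norm1 n y) ^ 2 - real (norm1 n x) ^ 2\<bar> \<le> 2 * real n * real (norm1 n x) + 1"
  using norm1_succs[OF assms]
proof
  assume "norm1 n y = Suc (norm1 n x)"
  then show ?thesis
    using mult_right_mono[of 1 "real n" "real (norm1 n x)"] n_pos
    by (simp add: power2_eq_square algebra_simps)
next
  assume "R0 n x \<and> norm1 n y + (n - 1) = norm1 n x"
  then have "real (norm1 n y) + real (n - 1) = real (norm1 n x)"
    by (metis of_nat_add)
  then have t: "real (norm1 n y) = real (norm1 n x) - (real n - 1)"
    using n_pos by (simp add: of_nat_diff)
  have "real (norm1 n y) ^ 2 \<le> real (norm1 n x) ^ 2"
    using t n_pos by (intro power_mono) auto
  then have "\<bar>real (norm1 n y) ^ 2 - real (norm1 n x) ^ 2\<bar>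
      = real (norm1 n x) ^ 2 - real (norm1 n y) ^ 2"
    by simp
  also have "\<dots> = (real n - 1) * (real (norm1 n x) + real (norm1 n y))"
    unfolding t by (simp add: power2_eq_square algebra_simps)
  also have "\<dots> \<le> real n * (2 * real (norm1 n x))"
    using t n_pos by (intro mult_mono) auto
  finally show ?thesis by simp
qed

lemma finite_sublevel_norm1: "finite (sublevel (\<lambda>x. real (norm1 n x)) c)"
  by (rule finite_sublevel_coord_le) (simp add: coord_le_norm1)

lemma finite_sublevel_lyapunov: "finite (sublevel (lyapunov n) c)"
  using coord_le_sqnorm sqnorm_le_lyapunov order_trans
  by (intro finite_sublevel_coord_le) blast

lemma finite_sublevel_norm1_sq_minus_lyapunov:
  "finite (sublevel (\<lambda>x. real n * real (norm1 n x) ^ 2 + (- 1) * lyapunov n x) c)"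
proof (rule finite_sublevel_coord_le)
  fix x i assume "i < n - 1"
  then have "real (x i) \<le> real (norm1 n x)"
    by (simp add: coord_le_norm1)
  also have "\<dots> \<le> real (norm1 n x) ^ 2"
    by (cases "norm1 n x") (auto simp: power2_eq_square)
  finally show "real (x i) \<le> real n * real (norm1 n x) ^ 2 + (- 1) * lyapunov n x"
    using norm1_sq_le[of x] by linarith
qed

end

locale stationary_X = X_kernel +
  fixes \<pi> :: "(nat \<Rightarrow> nat) \<Rightarrow> real"
  assumes two_le_n: "2 \<le> n" and stationary: "stationary n k \<pi>"
begin

sublocale stationary_chain "states n" "trans n k" "succs n" \<pi>
  using stationary by unfold_locales (auto simp: stationary_def)

lemma norm1_skip_free: "y \<in> succs n x \<Longrightarrow> norm1 n y \<le> Suc (norm1 n x)"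
  using norm1_succs by fastforce

lemma pi_summable: "\<pi> summable_on states n"
  using pi_has_sum by (auto simp: summable_on_def)

lemma pi_eq_0_off_R0_if_k_eq_n:
  assumes "k = n" and x: "x \<in> states n" and "\<not> R0 n x"
  shows "\<pi> x = 0"
proof -
  have "down_prob n k * real n = 1"
    using assms(1) n_pos by (simp add: down_prob_def of_nat_diff)
  then have drift_norm1': "drift (\<lambda>y. real (norm1 n y)) x = (if R0 n x then 0 else 1)"
    if "x \<in> states n" for x
    using drift_norm1[OF that] by simp
  have jump: "\<bar>real (norm1 n y) - real (norm1 n x)\<bar> \<le> real n" if "y \<in> succs n x" for x y
    using norm1_succs[OF that] n_pos by auto
  have "((\<lambda>x. \<pi> x * drift (\<lambda>y. real (norm1 n y)) x) has_sum 0) (states n)"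
    using finite_sublevel_norm1 norm1_skip_free _ jump
  proof (rule drift_has_sum_0_if_skip_free)
    show "mono (\<lambda>t. real t)" by (simp add: mono_def)
    show "(\<lambda>x. \<pi> x * real n) summable_on states n"
      using pi_summable by (rule summable_on_cmult_left)
  qed
  then have "\<pi> x * drift (\<lambda>y. real (norm1 n y)) x = 0"
    by (rule nonneg_has_sum_le_0D[OF _ order.refl _ x]) (simp add: drift_norm1' pi_nonneg)
  then show ?thesis
    using drift_norm1'[OF x] assms(3) by simp
qed

lemma pi_eq_0_if_pi_eq_0_off_R0:
  assumes off_R0: "\<And>x. x \<in> states n \<Longrightarrow> \<not> R0 n x \<Longrightarrow> \<pi> x = 0"
    and "x \<in> states n"
  shows "\<pi> x = 0"
  using \<open>x \<in> states n\<close>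
proof (induction "norm1 n x" arbitrary: x rule: less_induct)
  case less
  show ?case
  proof (cases "R0 n x")
    case True
    have "norm1 n (dec_all n x) < norm1 n x"
      using norm1_dec_all[OF True] two_le_n by linarith
    then have "\<pi> (dec_all n x) = 0"
      using less.hyps dec_all_in_states by blast
    moreover have "0 < trans n k x (dec_all n x)"
      using trans_dec_all_ge[OF True] down_prob_pos by linarith
    ultimately show ?thesis
      using less.prems dec_all_in_states by (rule pi_eq_0_if_P_pos[rotated 2])
  next
    case False
    with less.prems show ?thesis by (rule off_R0)
  qed
qed

lemma n_less_k: "n < k"
proof (rule ccontr)
  assume "\<not> n < k"
  then have "k = n" using n_le_k by simp
  have "\<pi> x = 0" if "x \<in> states n" for x
    by (rule pi_eq_0_if_pi_eq_0_off_R0[OF pi_eq_0_off_R0_if_k_eq_n[OF \<open>k = n\<close>] that])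
  then have "(\<pi> has_sum 0) (states n)"
    by (intro has_sum_0) auto
  from has_sum_unique[OF pi_has_sum this] show False
    by simp
qed

lemma summable_norm1: "(\<lambda>x. \<pi> x * real (norm1 n x)) summable_on states n"
proof (rule summable_of_drift_le[OF finite_sublevel_lyapunov])
  show "0 < 2 * (real k - real n) / real k"
    using n_less_k by simp
  show "drift (lyapunov n) x \<le> real n - 1 - 2 * (real k - real n) / real k * real (norm1 n x)"
    if "x \<in> states n" for x
    using drift_lyapunov[OF that] by simp
qed simp

lemma drift_norm1_sq_has_sum_0:
  "((\<lambda>x. \<pi> x * drift (\<lambda>y. real (norm1 n y) ^ 2) x) has_sum 0) (states n)"
  using finite_sublevel_norm1 norm1_skip_free _ abs_norm1_sq_increment_le
proof (rule drift_has_sum_0_if_skip_free)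
  show "mono (\<lambda>t. real t ^ 2)"
    by (auto simp: mono_def intro: power_mono)
  have "(\<lambda>x. 2 * real n * (\<pi> x * real (norm1 n x)) + \<pi> x) summable_on states n"
    using summable_norm1 pi_summable by (intro summable_on_add summable_on_cmult_right)
  then show "(\<lambda>x. \<pi> x * (2 * real n * real (norm1 n x) + 1)) summable_on states n"
    by (rule summable_on_cong[THEN iffD1, rotated]) (simp add: algebra_simps)
qed

lemma drift_lyapunov_has_sum:
  defines "M \<equiv> infsum (\<lambda>x. \<pi> x * real (norm1 n x)) (states n)"
  shows "((\<lambda>x. \<pi> x * drift (lyapunov n) x)
           has_sum (real n - 1 - 2 * (real k - real n) / real k * M)) (states n)"
proof -
  let ?\<kappa> = "2 * (real k - real n) / real k"
  have "((\<lambda>x. (real n - 1) * \<pi> x + (- ?\<kappa>) * (\<pi> x * real (norm1 n x)))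
      has_sum ((real n - 1) * 1 + (- ?\<kappa>) * M)) (states n)"
    unfolding M_def using summable_norm1 by (intro has_sum_add has_sum_cmult_right pi_has_sum) simp
  then show ?thesis
    by (subst has_sum_cong[where g = "\<lambda>x. (real n - 1) * \<pi> x + (- ?\<kappa>) * (\<pi> x * real (norm1 n x))"])
      (simp_all add: drift_lyapunov algebra_simps)
qed

theorem mean_norm1_has_sum:
  "((\<lambda>x. \<pi> x * real (norm1 n x))
     has_sum real k * (real n - 1) / (2 * (real k - real n))) (states n)"
proof -
  define M where "M = infsum (\<lambda>x. \<pi> x * real (norm1 n x)) (states n)"
  define \<kappa> where "\<kappa> = 2 * (real k - real n) / real k"
  have drift_F: "((\<lambda>x. \<pi> x * drift (lyapunov n) x) has_sum (real n - 1 - \<kappa> * M)) (states n)"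
    unfolding M_def \<kappa>_def by (rule drift_lyapunov_has_sum)
  have "((\<lambda>x. real n * (\<pi> x * drift (\<lambda>y. real (norm1 n y) ^ 2) x)
                + (- 1) * (\<pi> x * drift (lyapunov n) x))
      has_sum (real n * 0 + (- 1) * (real n - 1 - \<kappa> * M))) (states n)"
    by (intro has_sum_add has_sum_cmult_right drift_norm1_sq_has_sum_0 drift_F)
  then have drift_G:
    "((\<lambda>x. \<pi> x * drift (\<lambda>y. real n * real (norm1 n y) ^ 2 + (- 1) * lyapunov n y) x)
      has_sum - (real n - 1 - \<kappa> * M)) (states n)"
    unfolding drift_linear by (simp add: algebra_simps)
  have "0 \<le> real n - 1 - \<kappa> * M"
    by (rule drift_has_sum_nonneg[OF finite_sublevel_lyapunov drift_F])
  moreover have "0 \<le> - (real n - 1 - \<kappa> * M)"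
    by (rule drift_has_sum_nonneg[OF finite_sublevel_norm1_sq_minus_lyapunov drift_G])
  ultimately have "M = (real n - 1) / \<kappa>"
    using n_less_k by (simp add: \<kappa>_def field_simps)
  then show ?thesis
    using summable_norm1 by (simp add: has_sum_iff M_def \<kappa>_def mult.commute)
qed

end

theorem proposition6p1:
  fixes n k :: nat and \<pi> :: "(nat \<Rightarrow> nat) \<Rightarrow> real"
  assumes "3 \<le> n" and "n \<le> k"
    and "stable n k"
    and "stationary n k \<pi>"
  shows "((\<lambda>x. \<pi> x * real (norm1 n x)) has_sum
           (real k * (real n - 1) / (2 * (real k - real n)))) (states n)"
proof -
  interpret stationary_X n k \<pi>
    using assms by unfold_locales auto
  show ?thesis
    by (rule mean_norm1_has_sum)
qed

end
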